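(* Let $n\ge 1$ be an integer and $K=L=T=n^2$. For $r\in\{1,\ldots,n^2\}$ let $N(r)$ be the number of distinct integers in $\operatorname{Set}(\alpha)+\operatorname{Set}(\beta)$ for the $\mathsf{GASP}_r$ vectors $(\alpha,\beta)$ with these parameters. Then the minimum of $N(r)$ over $r\in\{1,\ldots,n^2\}$ is attained at $r=n$, and $N(n)=3$ if $n=1$, and $N(n)=n^4+2n^3+2n^2-n-2$ if $n\ge 2$.
   Context: For positive integers $K,L,T,r$ with $L\le K$ and $1\le r\le\min\{K,T\}$, the code $\mathsf{GASP}_r$ is given by the integer vectors $\alpha=(\alpha_{\mathrm p}\mid\alpha_{\mathrm s})$ and $\beta=(\beta_{\mathrm p}\mid\beta_{\mathrm s})$ (concatenations), where $\alpha_{\mathrm p}=(0,1,\ldots,K-1)$; $\alpha_{\mathrm s}$ is the vector of the $T$ smallest elements of $\{KL+j+Kt : 0\le j\le r-1,\ t\in\mathbb{Z}_{\ge 0}\}$ in increasing order; $\beta_{\mathrm p}=(0,K,\ldots,K(L-1))$; $\beta_{\mathrm s}=(KL,KL+1,\ldots,KL+T-1)$. $\operatorname{Set}(v)$ denotes the set of entries of $v$, and $A+B=\{a+b:a\in A,b\in B\}$. *)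

theory Defs
  imports Main
begin

definition smallest_elems :: "nat \<Rightarrow> nat set \<Rightarrow> nat set" where
  "smallest_elems T S = {x \<in> S. card {y \<in> S. y < x} < T}"

definition gasp_alpha_s :: "nat \<Rightarrow> nat \<Rightarrow> nat \<Rightarrow> nat \<Rightarrow> nat set" where
  "gasp_alpha_s K L T r =
     smallest_elems T {K * L + j + K * t | j t. j \<le> r - 1}"

definition gasp_alpha :: "nat \<Rightarrow> nat \<Rightarrow> nat \<Rightarrow> nat \<Rightarrow> nat set" where
  "gasp_alpha K L T r = {0..<K} \<union> gasp_alpha_s K L T r"

definition gasp_beta :: "nat \<Rightarrow> nat \<Rightarrow> nat \<Rightarrow> nat set" where
  "gasp_beta K L T = {K * l | l. l < L} \<union> {K * L ..< K * L + T}"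

definition sumset :: "nat set \<Rightarrow> nat set \<Rightarrow> nat set" where
  "sumset A B = {a + b | a b. a \<in> A \<and> b \<in> B}"

definition gasp_N :: "nat \<Rightarrow> nat \<Rightarrow> nat \<Rightarrow> nat \<Rightarrow> nat" where
  "gasp_N K L T r = card (sumset (gasp_alpha K L T r) (gasp_beta K L T))"

end

theory Submission
  imports Defs
begin

(* Listed in increasing order, the numbers K L + j + K t with j < r are the values of
   i \<mapsto> K L + K (i div r) + i mod r, which is strictly increasing for r \<le> K; so alpha_s
   consists of its values at 0, ..., T - 1.  For K = L = T = m the sumset splits into
   [0, m^2 + 2m - 1) coming from alpha_p, the blocks m^2 + m u + [0, r) for 2 \<le> u < m
   coming from alpha_s + beta_p, and one interval from 2 m^2 to max alpha_s + m^2 + m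
   coming from alpha_s + beta_s, which has no holes because consecutive entries of alpha_s
   differ by at most m.  This description is exact for r < m and a lower bound for r = m,
   so N(r) \<ge> m^2 + 2m - 1 + (m - 2) r + m (q + 1) + s where m - 1 = q r + s, s < r.
   For m = n^2, r times the difference of this bound at r and at n is
   (r - n) ((n^2 - 1) r - n^3) + (r - 1 - s) (m - r), and both products are nonnegative
   for integers r because n^3 / (n^2 - 1) \<le> n + 1. *)

lemma smallest_elems_strict_mono_range:
  assumes "strict_mono f"
  shows "smallest_elems T (range f) = f ` {..<T}"
proof -
  have "{y \<in> range f. y < f i} = f ` {..<i}" for i
    using strict_mono_less[OF assms] by auto
  then have "card {y \<in> range f. y < f i} = i" for i
    using strict_mono_imp_inj_on[OF assms] by (simp add: card_image inj_on_subset)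
  then show ?thesis
    unfolding smallest_elems_def by auto
qed

definition gasp_alpha_s_enum :: "nat \<Rightarrow> nat \<Rightarrow> nat \<Rightarrow> nat \<Rightarrow> nat" where
  "gasp_alpha_s_enum K L r i = K * L + K * (i div r) + i mod r"

lemma gasp_alpha_s_enum_altdef:
  assumes "r \<le> K"
  shows "gasp_alpha_s_enum K L r i = K * L + i + (K - r) * (i div r)"
proof -
  obtain d where "K = r + d" using assms le_Suc_ex by blast
  then show ?thesis
    unfolding gasp_alpha_s_enum_def by (simp add: algebra_simps)
qed

lemma strict_mono_gasp_alpha_s_enum:
  assumes "r \<le> K"
  shows "strict_mono (gasp_alpha_s_enum K L r)"
proof (rule strict_monoI)
  fix i j :: nat assume "i < j"
  then have "(K - r) * (i div r) \<le> (K - r) * (j div r)"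
    by (simp add: div_le_mono)
  with \<open>i < j\<close> show "gasp_alpha_s_enum K L r i < gasp_alpha_s_enum K L r j"
    unfolding gasp_alpha_s_enum_altdef[OF assms] by linarith
qed

lemma range_gasp_alpha_s_enum:
  assumes "1 \<le> r"
  shows "range (gasp_alpha_s_enum K L r) = {K * L + j + K * t | j t. j \<le> r - 1}"
proof (intro equalityI subsetI)
  fix x assume "x \<in> range (gasp_alpha_s_enum K L r)"
  then obtain i where "x = K * L + i mod r + K * (i div r)"
    unfolding gasp_alpha_s_enum_def by (auto simp: ac_simps)
  moreover have "i mod r \<le> r - 1"
    using assms by (simp add: less_Suc_eq_le[symmetric])
  ultimately show "x \<in> {K * L + j + K * t | j t. j \<le> r - 1}" by blast
next
  fix x assume "x \<in> {K * L + j + K * t | j t. j \<le> r - 1}"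
  then obtain j t where x: "x = K * L + j + K * t" and "j < r"
    using assms by auto
  then have "gasp_alpha_s_enum K L r (r * t + j) = x"
    unfolding gasp_alpha_s_enum_def by simp
  then show "x \<in> range (gasp_alpha_s_enum K L r)" by (metis rangeI)
qed

lemma gasp_alpha_s_eq:
  assumes "1 \<le> r" "r \<le> K"
  shows "gasp_alpha_s K L T r = gasp_alpha_s_enum K L r ` {..<T}"
  unfolding gasp_alpha_s_def range_gasp_alpha_s_enum[OF assms(1), symmetric]
  by (rule smallest_elems_strict_mono_range[OF strict_mono_gasp_alpha_s_enum[OF assms(2)]])

lemma sumsetI: "a \<in> A \<Longrightarrow> b \<in> B \<Longrightarrow> a + b \<in> sumset A B"
  unfolding sumset_def by blast

lemma sumset_Un_left: "sumset (A \<union> A') B = sumset A B \<union> sumset A' B"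
  unfolding sumset_def by blast

lemma sumset_Un_right: "sumset A (B \<union> B') = sumset A B \<union> sumset A B'"
  unfolding sumset_def by blast

lemma finite_sumset:
  assumes "finite A" "finite B"
  shows "finite (sumset A B)"
proof -
  have "sumset A B = (\<lambda>(a, b). a + b) ` (A \<times> B)"
    unfolding sumset_def by auto
  with assms show ?thesis by simp
qed

lemma sumset_atLeastLessThan_multiples: "sumset {0..<K} {K * l | l. l < L} = {..<K * L}"
proof (intro equalityI subsetI)
  fix x assume "x \<in> sumset {0..<K} {K * l | l. l < L}"
  then obtain a l where "x = a + K * l" "a < K" "l < L"
    unfolding sumset_def by auto
  moreover have "K * l + K \<le> K * L"
    using \<open>l < L\<close> mult_le_mono2[of "l + 1" L K] by simp
  ultimately show "x \<in> {..<K * L}" by simp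
next
  fix x assume "x \<in> {..<K * L}"
  moreover from this have "0 < K" by (cases K) auto
  ultimately have "x mod K + K * (x div K) \<in> sumset {0..<K} {K * l | l. l < L}"
    by (intro sumsetI) (auto simp: less_mult_imp_div_less mult.commute)
  then show "x \<in> sumset {0..<K} {K * l | l. l < L}" by simp
qed

lemma sumset_atLeastLessThan_interval:
  assumes "1 \<le> k"
  shows "sumset {0..<k} {b..<b + k} = {b..<b + 2 * k - 1}"
proof (intro equalityI subsetI)
  fix x assume "x \<in> sumset {0..<k} {b..<b + k}"
  then show "x \<in> {b..<b + 2 * k - 1}"
    unfolding sumset_def by auto
next
  fix x assume x: "x \<in> {b..<b + 2 * k - 1}"
  show "x \<in> sumset {0..<k} {b..<b + k}"
  proof (cases "x < b + k")
    case True
    then have "0 + x \<in> sumset {0..<k} {b..<b + k}"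
      using x assms by (intro sumsetI) auto
    then show ?thesis by simp
  next
    case False
    then have "(x - (b + k - 1)) + (b + k - 1) \<in> sumset {0..<k} {b..<b + k}"
      using x assms by (intro sumsetI) auto
    with False show ?thesis by simp
  qed
qed

lemma sumset_gasp_alpha_beta:
  "sumset (gasp_alpha K L T r) (gasp_beta K L T)
     = sumset {0..<K} {K * l | l. l < L} \<union> sumset {0..<K} {K * L..<K * L + T}
       \<union> sumset (gasp_alpha_s K L T r) {K * l | l. l < L}
       \<union> sumset (gasp_alpha_s K L T r) {K * L..<K * L + T}"
  unfolding gasp_alpha_def gasp_beta_def sumset_Un_left sumset_Un_right by blast

lemma sumset_gasp_alpha_beta_square:
  assumes "1 \<le> m"
  shows "sumset (gasp_alpha m m m r) (gasp_beta m m m)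
     = {..<m * m + 2 * m - 1}
       \<union> sumset (gasp_alpha_s m m m r) {m * l | l. l < m}
       \<union> sumset (gasp_alpha_s m m m r) {m * m..<m * m + m}"
proof -
  have "sumset {0..<m} {m * l | l. l < m} \<union> sumset {0..<m} {m * m..<m * m + m}
      = {..<m * m + 2 * m - 1}"
    unfolding sumset_atLeastLessThan_multiples sumset_atLeastLessThan_interval[OF assms]
    using assms by auto
  then show ?thesis
    unfolding sumset_gasp_alpha_beta by blast
qed

definition gasp_blocks :: "nat \<Rightarrow> nat \<Rightarrow> nat set" where
  "gasp_blocks m r =
     {..<m * m + 2 * m - 1}
     \<union> (\<lambda>(u, j). m * m + m * u + j) ` ({2..<m} \<times> {..<r})
     \<union> {2 * m * m ..< m * m + m + gasp_alpha_s_enum m m r (m - 1)}"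

lemma sumset_gasp_alpha_s_beta_s:
  assumes "1 \<le> r" "r \<le> m"
  shows "sumset (gasp_alpha_s m m m r) {m * m..<m * m + m}
    = {2 * m * m ..< m * m + m + gasp_alpha_s_enum m m r (m - 1)}"
    (is "sumset ?A ?B = {_..<m * m + m + ?top}")
proof (intro equalityI subsetI)
  fix x assume "x \<in> sumset ?A ?B"
  then obtain i b where "x = gasp_alpha_s_enum m m r i + b" "i < m" "b \<in> ?B"
    unfolding sumset_def gasp_alpha_s_eq[OF assms] by blast
  moreover have "gasp_alpha_s_enum m m r i \<le> ?top"
    using \<open>i < m\<close> strict_mono_gasp_alpha_s_enum[OF assms(2)] by (simp add: strict_mono_less_eq)
  moreover have "m * m \<le> gasp_alpha_s_enum m m r i"
    unfolding gasp_alpha_s_enum_def by simp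
  ultimately show "x \<in> {2 * m * m..<m * m + m + ?top}" by auto
next
  have alpha_s: "gasp_alpha_s_enum m m r i \<in> ?A" if "i < m" for i
    using that unfolding gasp_alpha_s_eq[OF assms] by blast
  define q where "q = (m - 1) div r"
  have top: "?top = m * m + m * q + (m - 1) mod r"
    unfolding q_def gasp_alpha_s_enum_def ..
  fix x assume x: "x \<in> {2 * m * m..<m * m + m + ?top}"
  define w where "w = x - 2 * m * m"
  show "x \<in> sumset ?A ?B"
  proof (cases "w < m * q + (m - 1) mod r")
    case True
    \<comment> \<open>the gaps of \<open>\<alpha>\<^sub>s\<close> are at most \<open>m\<close>: \<open>m * m + m * (w div m) \<in> \<alpha>\<^sub>s\<close>\<close>
    have "(m - 1) mod r < m"
      using assms by (meson mod_less_divisor order.strict_trans2 zero_less_one)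
    with True have "w < (q + 1) * m" by (simp add: mult.commute)
    then have "w div m < q + 1"
      by (rule less_mult_imp_div_less)
    then have "w div m * r \<le> q * r" by simp
    also have "\<dots> \<le> m - 1"
      unfolding q_def by (rule div_times_less_eq_dividend)
    also have "\<dots> < m" using assms by simp
    finally have "gasp_alpha_s_enum m m r (w div m * r) + (m * m + w mod m) \<in> sumset ?A ?B"
      using assms by (intro sumsetI alpha_s) auto
    moreover have "gasp_alpha_s_enum m m r (w div m * r) = m * m + m * (w div m)"
      using assms unfolding gasp_alpha_s_enum_def by simp
    ultimately show ?thesis
      using x unfolding w_def by (simp add: algebra_simps)
  next
    case False
    then have "?top + (x - ?top) \<in> sumset ?A ?B"
      using x assms top unfolding w_def by (intro sumsetI alpha_s) auto
    moreover have "?top \<le> x"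
      using False x top unfolding w_def by auto
    ultimately show ?thesis by simp
  qed
qed

lemma image_subset_sumset_gasp_alpha_s_beta_p:
  assumes "1 \<le> r" "r \<le> m"
  shows "(\<lambda>(u, j). m * m + m * u + j) ` ({2..<m} \<times> {..<r})
    \<subseteq> sumset (gasp_alpha_s m m m r) {m * l | l. l < m}"
proof
  fix x assume "x \<in> (\<lambda>(u, j). m * m + m * u + j) ` ({2..<m} \<times> {..<r})"
  then obtain u j where "u < m" "j < r" "x = m * m + m * u + j" by auto
  moreover have "gasp_alpha_s_enum m m r j + m * u
      \<in> sumset (gasp_alpha_s m m m r) {m * l | l. l < m}"
    using \<open>u < m\<close> \<open>j < r\<close> assms unfolding gasp_alpha_s_eq[OF assms] by (intro sumsetI) auto
  moreover have "gasp_alpha_s_enum m m r j = m * m + j"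
    using \<open>j < r\<close> unfolding gasp_alpha_s_enum_def by simp
  ultimately show "x \<in> sumset (gasp_alpha_s m m m r) {m * l | l. l < m}"
    by (simp add: ac_simps)
qed

lemma sumset_gasp_alpha_s_beta_p_subset:
  assumes "1 \<le> r" "r \<le> m" "r < m \<or> m = 1"
  shows "sumset (gasp_alpha_s m m m r) {m * l | l. l < m} \<subseteq> gasp_blocks m r"
proof
  let ?top = "gasp_alpha_s_enum m m r (m - 1)"
  fix x assume "x \<in> sumset (gasp_alpha_s m m m r) {m * l | l. l < m}"
  then obtain i l where x: "x = gasp_alpha_s_enum m m r i + m * l" and "i < m" "l < m"
    unfolding sumset_def gasp_alpha_s_eq[OF assms(1,2)] by blast
  have "gasp_alpha_s_enum m m r i \<le> ?top"
    using \<open>i < m\<close> strict_mono_gasp_alpha_s_enum[OF assms(2)] by (simp add: strict_mono_less_eq)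
  moreover have "m * l \<le> m * m" using \<open>l < m\<close> by simp
  ultimately have upper: "x < m * m + m + ?top"
    using x assms by linarith
  define u where "u = i div r + l"
  define j where "j = i mod r"
  have x_eq: "x = m * m + m * u + j"
    using x unfolding u_def j_def gasp_alpha_s_enum_def by (simp add: algebra_simps)
  have "j < r" using assms(1) unfolding j_def by simp
  \<comment> \<open>for \<open>r = m > 1\<close> the sum \<open>m * m + m * 1 + (m - 1)\<close> would lie outside \<open>gasp_blocks m r\<close>\<close>
  consider "u < 2" "u = 0 \<or> r < m" | "2 \<le> u" "u < m" | "m \<le> u"
    using assms(3) by linarith
  then show "x \<in> gasp_blocks m r"
  proof cases
    case 1
    then have "x < m * m + 2 * m - 1" using x_eq \<open>j < r\<close> assms(2) by (auto simp: less_2_cases_iff)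
    then show ?thesis unfolding gasp_blocks_def by simp
  next
    case 2
    then have "x \<in> (\<lambda>(u, j). m * m + m * u + j) ` ({2..<m} \<times> {..<r})"
      using x_eq \<open>j < r\<close> by (intro rev_image_eqI[of "(u, j)"]) auto
    then show ?thesis unfolding gasp_blocks_def by blast
  next
    case 3
    then have "m * m \<le> m * u" by simp
    then have "2 * m * m \<le> x" using x_eq by linarith
    with upper show ?thesis unfolding gasp_blocks_def by simp
  qed
qed

lemma gasp_blocks_subset_sumset:
  assumes "1 \<le> r" "r \<le> m"
  shows "gasp_blocks m r \<subseteq> sumset (gasp_alpha m m m r) (gasp_beta m m m)"
  unfolding sumset_gasp_alpha_beta_square[OF order.trans[OF assms]]
    sumset_gasp_alpha_s_beta_s[OF assms] gasp_blocks_def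
  using image_subset_sumset_gasp_alpha_s_beta_p[OF assms] by blast

lemma sumset_gasp_alpha_beta_eq_gasp_blocks:
  assumes "1 \<le> r" "r \<le> m" "r < m \<or> m = 1"
  shows "sumset (gasp_alpha m m m r) (gasp_beta m m m) = gasp_blocks m r"
proof
  show "sumset (gasp_alpha m m m r) (gasp_beta m m m) \<subseteq> gasp_blocks m r"
    unfolding sumset_gasp_alpha_beta_square[OF order.trans[OF assms(1,2)]]
      sumset_gasp_alpha_s_beta_s[OF assms(1,2)]
    using sumset_gasp_alpha_s_beta_p_subset[OF assms] unfolding gasp_blocks_def by blast
qed (rule gasp_blocks_subset_sumset[OF assms(1,2)])

lemma card_gasp_blocks:
  assumes "1 \<le> r" "r \<le> m"
  shows "card (gasp_blocks m r)
    = (m * m + 2 * m - 1) + ((m - 2) * r + m * ((m - 1) div r + 1) + (m - 1) mod r)"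
proof -
  let ?f = "\<lambda>(u, j). m * m + m * u + j"
  let ?low = "{..<m * m + 2 * m - 1}"
  let ?mid = "?f ` ({2..<m} \<times> {..<r})"
  let ?high = "{2 * m * m ..< m * m + m + gasp_alpha_s_enum m m r (m - 1)}"
  have "inj_on ?f ({2..<m} \<times> {..<r})"
  proof (rule inj_onI, clarify)
    fix u j u' j' assume "j < r" "j' < r" "m * m + m * u + j = m * m + m * u' + j'"
    then have "m * u + j = m * u' + j'" and "j < m" "j' < m"
      using assms(2) by simp_all
    then have "(m * u + j) div m = (m * u' + j') div m" "(m * u + j) mod m = (m * u' + j') mod m"
      by simp_all
    with \<open>j < m\<close> \<open>j' < m\<close> show "u = u' \<and> j = j'" by simp
  qed
  then have card_mid: "card ?mid = (m - 2) * r"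
    by (simp add: card_image)
  have mid_bounds: "m * m + 2 * m \<le> y \<and> y < 2 * m * m" if "y \<in> ?mid" for y
  proof -
    obtain u j where "2 \<le> u" "u < m" "j < r" "y = m * m + m * u + j"
      using \<open>y \<in> ?mid\<close> by auto
    moreover have "2 * m \<le> m * u" "m * u + m \<le> m * m"
      using \<open>2 \<le> u\<close> \<open>u < m\<close> mult_le_mono2[of "u + 1" m m] by simp_all
    moreover have "2 * m * m = m * m + m * m" by simp
    ultimately show ?thesis using assms(2) by linarith
  qed
  have "m * m + 2 * m - 1 \<le> 2 * m * m"
    using assms by (cases m) simp_all
  then have "?low \<inter> ?mid = {}" "(?low \<union> ?mid) \<inter> ?high = {}"
    using mid_bounds by force+
  then have "card (gasp_blocks m r) = card ?low + card ?mid + card ?high"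
    unfolding gasp_blocks_def by (simp add: card_Un_disjoint)
  then show ?thesis
    using card_mid assms unfolding gasp_alpha_s_enum_def by simp
qed

lemma square_minus_one_div_mod:
  fixes n :: nat
  shows "(n * n - 1) div n = n - 1 \<and> (n * n - 1) mod n = n - 1"
proof (cases n)
  case (Suc k)
  then have "n * n - 1 = k + n * k" "k < n" "n - 1 = k" by simp_all
  then show ?thesis by simp
qed simp

lemma gasp_excess_factor_nonneg:
  fixes n r :: int
  assumes "2 \<le> n"
  shows "0 \<le> (r - n) * ((n\<^sup>2 - 1) * r - n ^ 3)"
proof (cases "r \<le> n")
  case True
  have "(n\<^sup>2 - 1) * r \<le> (n\<^sup>2 - 1) * n"
    using True assms by (intro mult_left_mono) (auto simp: power2_eq_square)
  also have "\<dots> \<le> n ^ 3"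
    using assms by (simp add: power2_eq_square power3_eq_cube algebra_simps)
  finally show ?thesis
    using True by (intro mult_nonpos_nonpos) auto
next
  case False
  have "n + 1 \<le> n * n"
    using mult_right_mono[of 2 n n] assms by linarith
  then have "n ^ 3 \<le> (n\<^sup>2 - 1) * (n + 1)"
    by (simp add: power2_eq_square power3_eq_cube algebra_simps)
  also have "\<dots> \<le> (n\<^sup>2 - 1) * r"
    using False assms by (intro mult_left_mono) (auto simp: power2_eq_square)
  finally show ?thesis
    using False by (intro mult_nonneg_nonneg) auto
qed

lemma gasp_excess_int_le:
  fixes N R Q S :: int
  assumes "2 \<le> N" "0 \<le> S" "S < R" "R \<le> N\<^sup>2" "Q * R + S = N\<^sup>2 - 1"
  shows "(N\<^sup>2 - 2) * N + N\<^sup>2 * N + N - 1 \<le> (N\<^sup>2 - 2) * R + N\<^sup>2 * (Q + 1) + S"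
proof -
  define D where
    "D = ((N\<^sup>2 - 2) * R + N\<^sup>2 * (Q + 1) + S) - ((N\<^sup>2 - 2) * N + N\<^sup>2 * N + N - 1)"
  have "R * D = (R - N) * ((N\<^sup>2 - 1) * R - N ^ 3) + (R - 1 - S) * (N\<^sup>2 - R)"
    unfolding D_def using assms(5) by algebra
  moreover have "0 \<le> (R - N) * ((N\<^sup>2 - 1) * R - N ^ 3)"
    using assms(1) by (rule gasp_excess_factor_nonneg)
  moreover have "0 \<le> (R - 1 - S) * (N\<^sup>2 - R)"
    using assms(3,4) by simp
  ultimately have "0 \<le> R * D" by linarith
  with assms(2,3) have "0 \<le> D" by (simp add: zero_le_mult_iff)
  then show ?thesis unfolding D_def by simp
qed

lemma card_gasp_blocks_minimal:
  assumes "1 \<le> r" "r \<le> n * n"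
  shows "card (gasp_blocks (n * n) n) \<le> card (gasp_blocks (n * n) r)"
proof (cases "n = 1")
  case True
  with assms show ?thesis by simp
next
  case False
  with assms have "2 \<le> n" by (cases n) auto
  define m where "m = n * n"
  define q where "q = (m - 1) div r"
  define s where "s = (m - 1) mod r"
  have "s < r" "q * r + s = m - 1"
    using assms(1) unfolding q_def s_def by simp_all
  have "4 \<le> m"
    unfolding m_def using mult_le_mono[OF \<open>2 \<le> n\<close> \<open>2 \<le> n\<close>] by simp
  have int_m: "int m = (int n)\<^sup>2" and int_m2: "int (m - 2) = (int n)\<^sup>2 - 2"
    using \<open>4 \<le> m\<close> unfolding m_def by (simp_all add: power2_eq_square)
  have "int q * int r + int s = (int n)\<^sup>2 - 1"
    using \<open>q * r + s = m - 1\<close> \<open>4 \<le> m\<close> int_m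
    by (metis of_nat_add of_nat_mult of_nat_diff of_nat_1 le_trans one_le_numeral)
  moreover have "int r \<le> (int n)\<^sup>2"
    using assms(2) by (metis of_nat_le_iff of_nat_mult power2_eq_square)
  ultimately have "((int n)\<^sup>2 - 2) * int n + (int n)\<^sup>2 * int n + int n - 1
      \<le> ((int n)\<^sup>2 - 2) * int r + (int n)\<^sup>2 * (int q + 1) + int s"
    using \<open>2 \<le> n\<close> \<open>s < r\<close> by (intro gasp_excess_int_le) simp_all
  moreover have "(m - 1) div n = n - 1" "(m - 1) mod n = n - 1"
    using square_minus_one_div_mod[of n] unfolding m_def by simp_all
  ultimately have "int ((m - 2) * n + m * ((m - 1) div n + 1) + (m - 1) mod n)
      \<le> int ((m - 2) * r + m * (q + 1) + s)"
    using \<open>2 \<le> n\<close> unfolding of_nat_add of_nat_mult int_m int_m2 by simp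
  then have excess: "(m - 2) * n + m * ((m - 1) div n + 1) + (m - 1) mod n
      \<le> (m - 2) * r + m * (q + 1) + s"
    by (simp only: of_nat_le_iff)
  have "1 \<le> n" "n \<le> m" "r \<le> m"
    using \<open>2 \<le> n\<close> assms unfolding m_def by simp_all
  from excess show ?thesis
    unfolding m_def[symmetric] q_def s_def card_gasp_blocks[OF \<open>1 \<le> n\<close> \<open>n \<le> m\<close>]
      card_gasp_blocks[OF assms(1) \<open>r \<le> m\<close>]
    by (rule add_left_mono)
qed

lemma gasp_N_eq_card_gasp_blocks:
  assumes "1 \<le> r" "r \<le> m" "r < m \<or> m = 1"
  shows "gasp_N m m m r = card (gasp_blocks m r)"
  unfolding gasp_N_def sumset_gasp_alpha_beta_eq_gasp_blocks[OF assms] ..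

lemma card_gasp_blocks_le_gasp_N:
  assumes "1 \<le> r" "r \<le> m"
  shows "card (gasp_blocks m r) \<le> gasp_N m m m r"
proof -
  have "finite (gasp_alpha m m m r)" "finite (gasp_beta m m m)"
    unfolding gasp_alpha_def gasp_alpha_s_eq[OF assms] gasp_beta_def by simp_all
  then show ?thesis
    unfolding gasp_N_def by (intro card_mono finite_sumset gasp_blocks_subset_sumset assms)
qed

lemma card_gasp_blocks_square:
  assumes "1 \<le> n"
  shows "card (gasp_blocks (n * n) n)
    = (n * n * (n * n) + 2 * (n * n) - 1) + ((n * n - 2) * n + n * n * n + (n - 1))"
proof -
  have "n \<le> n * n" using assms by simp
  have "card (gasp_blocks (n * n) n)
      = (n * n * (n * n) + 2 * (n * n) - 1) + ((n * n - 2) * n + n * n * (n - 1 + 1) + (n - 1))"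
    unfolding card_gasp_blocks[OF assms \<open>n \<le> n * n\<close>] square_minus_one_div_mod[THEN conjunct1]
      square_minus_one_div_mod[THEN conjunct2] by (rule refl)
  with assms show ?thesis by simp
qed

lemma int_card_gasp_blocks_square:
  assumes "2 \<le> n"
  shows "int (card (gasp_blocks (n * n) n)) = int n^4 + 2 * int n^3 + 2 * int n^2 - int n - 2"
proof -
  have "1 \<le> n * n * (n * n) + 2 * (n * n)" "2 \<le> n * n" "1 \<le> n"
    using assms le_square[of n] by linarith+
  then have "int (card (gasp_blocks (n * n) n))
      = (int n * int n * (int n * int n) + 2 * (int n * int n) - 1)
        + ((int n * int n - 2) * int n + int n * int n * int n + (int n - 1))"
    unfolding card_gasp_blocks_square[OF \<open>1 \<le> n\<close>]
    by (simp only: of_nat_add of_nat_mult of_nat_diff of_nat_1 of_nat_numeral)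
  then show ?thesis
    by (simp add: power2_eq_square power3_eq_cube power4_eq_xxxx algebra_simps)
qed

theorem proposition1:
  fixes n :: nat
  assumes "n \<ge> 1"
  shows "(\<forall>r \<in> {1..n^2}. gasp_N (n^2) (n^2) (n^2) n \<le> gasp_N (n^2) (n^2) (n^2) r)
    \<and> (n = 1 \<longrightarrow> gasp_N (n^2) (n^2) (n^2) n = 3)
    \<and> (n \<ge> 2 \<longrightarrow> int (gasp_N (n^2) (n^2) (n^2) n)
           = int n^4 + 2 * int n^3 + 2 * int n^2 - int n - 2)"
proof -
  have "n \<le> n * n" "n < n * n \<or> n * n = 1"
    using assms by (auto simp: less_le)
  note N_n = gasp_N_eq_card_gasp_blocks[OF assms this]
  have "gasp_N (n * n) (n * n) (n * n) n \<le> gasp_N (n * n) (n * n) (n * n) r"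
    if "r \<in> {1..n * n}" for r
    using that card_gasp_blocks_minimal[of r n] card_gasp_blocks_le_gasp_N[of r "n * n"] N_n
    by simp
  moreover have "gasp_N (n * n) (n * n) (n * n) n = 3" if "n = 1"
    using that N_n card_gasp_blocks_square[of 1] by simp
  moreover have "int (gasp_N (n * n) (n * n) (n * n) n)
      = int n^4 + 2 * int n^3 + 2 * int n^2 - int n - 2" if "n \<ge> 2"
    using N_n int_card_gasp_blocks_square[OF that] by simp
  ultimately show ?thesis
    unfolding power2_eq_square[of n] by blast
qed

end
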